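(* Fix $h\in\{2,\dots,H\}$ and $N\ge N_{KD}$, and assume $f^\star\in\mathcal{F}_N$. For any $\delta\in(0,1)$, with probability at least $1-\delta$, the empirical risk minimizer $\hat f\in\arg\min_{f\in\mathcal{F}_N}\sum_{i=1}^n(f(x_i,a_i,x_i')-y_i)^2$ based on $n$ i.i.d. samples $(x_i,a_i,x_i',y_i)$ from $D$ satisfies $$\mathbb{E}_D\big[(\hat f(x,a,x')-f^\star(x,a,x'))^2\big]\le\Delta_{reg},\qquad\Delta_{reg}=\frac{16(\ln|\Phi_N|+N^2|\mathcal{A}|\ln(n)+\ln(2/\delta))}{n}.$$
   Context: Block MDP: horizon $H$; finite latent states $\mathcal{S}=\sqcup_h\mathcal{S}_h$; countable observations $\mathcal{X}=\sqcup_h\mathcal{X}_h$; finite actions $\mathcal{A}$; transitions $T(\cdot\mid s,a)\in\Delta(\mathcal{S}_{h+1})$; emissions $q(\cdot\mid s)\in\Delta(\mathcal{X}_h)$ with disjoint supports, decoder $g^\star$; $T(x'\mid x,a)=q(x'\mid g^\star(x'))T(g^\star(x')\mid g^\star(x),a)$. $\Psi_{h-1}$ is a finite set of policies forming an $\alpha$-policy cover of $\mathcal{S}_{h-1}$. Distribution $D$: draw two independent transitions $(x_j,a_j,x_j')$, each by rolling in to $x_j\in\mathcal{X}_{h-1}$ with a uniformly chosen policy from $\Psi_{h-1}$, taking $a_j\sim\mathrm{Unf}(\mathcal{A})$, $x_j'\sim T(\cdot\mid x_j,a_j)$; with probability $1/2$ output $(x_1,a_1,x_1',1)$, else $(x_1,a_1,x_2',0)$.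 $\rho_h$ is the marginal law of $x_1'$, and $f^\star(x,a,x')=\frac{T(g^\star(x')\mid g^\star(x),a)}{T(g^\star(x')\mid g^\star(x),a)+\rho_h(g^\star(x'))}$ is the Bayes optimal square-loss predictor. $\Phi_N$ is a finite class of maps $\mathcal{X}\to[N]$; $\mathcal{W}_N$ is all functions $[N]\times\mathcal{A}\times[N]\to[0,1]$; $\mathcal{F}_N=\{(x,a,x')\mapsto w(\phi^F(x),a,\phi^B(x')):w\in\mathcal{W}_N,\phi^F,\phi^B\in\Phi_N\}$. $N_{KD}$ is the maximum over $h$ of the number of kinematic-inseparability classes in $\mathcal{X}_h$. *)

theory Defs
  imports "HOL-Probability.Probability"
begin

text \<open>Latent states of type 's (finite), observations of type 'x
(countable), actions of type 'a (finite). The layer of a state is ls s, the layer of an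
observation is lx x (layers 1..H). Transitions T s a, emissions q s, decoder g,
initial latent distribution mu (supported on layer 1).\<close>

text \<open>Observation-level transition T(x'|x,a) = q(x'|g x') T(g x'|g x,a).\<close>
definition obs_trans :: "('s \<Rightarrow> 'a \<Rightarrow> 's pmf) \<Rightarrow> ('s \<Rightarrow> 'x pmf) \<Rightarrow> ('x \<Rightarrow> 's) \<Rightarrow> 'x \<Rightarrow> 'a \<Rightarrow> 'x pmf" where
  "obs_trans T q g x a = bind_pmf (T (g x) a) q"

text \<open>Index k represents layer k+1.\<close>
primrec obs_dist_aux :: "'s pmf \<Rightarrow> ('s \<Rightarrow> 'a \<Rightarrow> 's pmf) \<Rightarrow> ('s \<Rightarrow> 'x pmf) \<Rightarrow> ('x \<Rightarrow> 's)
    \<Rightarrow> ('x \<Rightarrow> 'a pmf) \<Rightarrow> nat \<Rightarrow> 'x pmf" where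
  "obs_dist_aux mu T q g p 0 = bind_pmf mu q"
| "obs_dist_aux mu T q g p (Suc k) =
     bind_pmf (obs_dist_aux mu T q g p k) (\<lambda>x. bind_pmf (p x) (\<lambda>a. obs_trans T q g x a))"

definition rollin :: "'s pmf \<Rightarrow> ('s \<Rightarrow> 'a \<Rightarrow> 's pmf) \<Rightarrow> ('s \<Rightarrow> 'x pmf) \<Rightarrow> ('x \<Rightarrow> 's)
    \<Rightarrow> ('x \<Rightarrow> 'a pmf) \<Rightarrow> nat \<Rightarrow> 'x pmf" where
  "rollin mu T q g p h = obs_dist_aux mu T q g p (h - 1)"

definition reach :: "'s pmf \<Rightarrow> ('s \<Rightarrow> 'a \<Rightarrow> 's pmf) \<Rightarrow> ('s \<Rightarrow> 'x pmf) \<Rightarrow> ('x \<Rightarrow> 's)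
    \<Rightarrow> ('x \<Rightarrow> 'a pmf) \<Rightarrow> nat \<Rightarrow> 's \<Rightarrow> real" where
  "reach mu T q g p h s = measure_pmf.prob (rollin mu T q g p h) {x. g x = s}"

definition policy_cover :: "'s pmf \<Rightarrow> ('s \<Rightarrow> 'a \<Rightarrow> 's pmf) \<Rightarrow> ('s \<Rightarrow> 'x pmf) \<Rightarrow> ('x \<Rightarrow> 's)
    \<Rightarrow> ('s \<Rightarrow> nat) \<Rightarrow> ('x \<Rightarrow> 'a pmf) set \<Rightarrow> real \<Rightarrow> nat \<Rightarrow> bool" where
  "policy_cover mu T q g ls Psi alpha h \<longleftrightarrow>
     (\<forall>s. ls s = h \<longrightarrow>
        (\<exists>p\<in>Psi. reach mu T q g p h s \<ge> alpha * (SUP p'. reach mu T q g p' h s)))"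

definition trans_sample :: "'s pmf \<Rightarrow> ('s \<Rightarrow> 'a::finite \<Rightarrow> 's pmf) \<Rightarrow> ('s \<Rightarrow> 'x pmf) \<Rightarrow> ('x \<Rightarrow> 's)
    \<Rightarrow> ('x \<Rightarrow> 'a pmf) set \<Rightarrow> nat \<Rightarrow> ('x \<times> 'a \<times> 'x) pmf" where
  "trans_sample mu T q g Psi h =
     bind_pmf (pmf_of_set Psi) (\<lambda>p.
       bind_pmf (rollin mu T q g p (h - 1)) (\<lambda>x.
         bind_pmf (pmf_of_set UNIV) (\<lambda>a.
           map_pmf (\<lambda>x'. (x, a, x')) (obs_trans T q g x a))))"

definition contrastive_dist :: "'s pmf \<Rightarrow> ('s \<Rightarrow> 'a::finite \<Rightarrow> 's pmf) \<Rightarrow> ('s \<Rightarrow> 'x pmf) \<Rightarrow> ('x \<Rightarrow> 's)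
    \<Rightarrow> ('x \<Rightarrow> 'a pmf) set \<Rightarrow> nat \<Rightarrow> ('x \<times> 'a \<times> 'x \<times> real) pmf" where
  "contrastive_dist mu T q g Psi h =
     bind_pmf (trans_sample mu T q g Psi h) (\<lambda>(x1, a1, x1').
       bind_pmf (trans_sample mu T q g Psi h) (\<lambda>(x2, a2, x2').
         map_pmf (\<lambda>b. if b then (x1, a1, x1', 1) else (x1, a1, x2', 0)) (bernoulli_pmf (1/2))))"

definition rho :: "'s pmf \<Rightarrow> ('s \<Rightarrow> 'a::finite \<Rightarrow> 's pmf) \<Rightarrow> ('s \<Rightarrow> 'x pmf) \<Rightarrow> ('x \<Rightarrow> 's)
    \<Rightarrow> ('x \<Rightarrow> 'a pmf) set \<Rightarrow> nat \<Rightarrow> 's \<Rightarrow> real" where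
  "rho mu T q g Psi h s = measure_pmf.prob (trans_sample mu T q g Psi h) {(x, a, x'). g x' = s}"

definition fstar :: "'s pmf \<Rightarrow> ('s \<Rightarrow> 'a::finite \<Rightarrow> 's pmf) \<Rightarrow> ('s \<Rightarrow> 'x pmf) \<Rightarrow> ('x \<Rightarrow> 's)
    \<Rightarrow> ('x \<Rightarrow> 'a pmf) set \<Rightarrow> nat \<Rightarrow> 'x \<Rightarrow> 'a \<Rightarrow> 'x \<Rightarrow> real" where
  "fstar mu T q g Psi h x a x' =
     pmf (T (g x) a) (g x') / (pmf (T (g x) a) (g x') + rho mu T q g Psi h (g x'))"

text \<open>[N] is rendered as {0..<N}. W_N: functions [N] x A x [N] -> [0,1]
(values outside [N] are irrelevant after composition with maps into [N]).\<close>
definition W_set :: "nat \<Rightarrow> (nat \<Rightarrow> 'a \<Rightarrow> nat \<Rightarrow> real) set" where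
  "W_set N = {w. \<forall>i<N. \<forall>a. \<forall>j<N. 0 \<le> w i a j \<and> w i a j \<le> 1}"

definition F_set :: "nat \<Rightarrow> ('x \<Rightarrow> nat) set \<Rightarrow> ('x \<Rightarrow> 'a \<Rightarrow> 'x \<Rightarrow> real) set" where
  "F_set N Phi = {f. \<exists>w\<in>W_set N. \<exists>phiF\<in>Phi. \<exists>phiB\<in>Phi.
                     f = (\<lambda>x a x'. w (phiF x) a (phiB x'))}"

definition emp_risk :: "('x \<Rightarrow> 'a \<Rightarrow> 'x \<Rightarrow> real) \<Rightarrow> nat \<Rightarrow> (nat \<Rightarrow> 'x \<times> 'a \<times> 'x \<times> real) \<Rightarrow> real" where
  "emp_risk f n S = (\<Sum>i<n. (case S i of (x, a, x', y) \<Rightarrow> (f x a x' - y)\<^sup>2))"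

text \<open>Forward: identical observation-level transition
kernels for every action (only meaningful below the last layer H).\<close>
definition posterior :: "('s \<Rightarrow> 'a \<Rightarrow> 's pmf) \<Rightarrow> ('s \<Rightarrow> 'x pmf) \<Rightarrow> ('x \<Rightarrow> 's)
    \<Rightarrow> ('x \<times> 'a) pmf \<Rightarrow> 'x \<Rightarrow> 'x \<times> 'a \<Rightarrow> real" where
  "posterior T q g u x' = (\<lambda>(x, a). pmf u (x, a) * pmf (obs_trans T q g x a) x' /
      measure_pmf.expectation u (\<lambda>(z, b). pmf (obs_trans T q g z b) x'))"

definition kin_insep :: "nat \<Rightarrow> ('s \<Rightarrow> 'a \<Rightarrow> 's pmf) \<Rightarrow> ('s \<Rightarrow> 'x pmf) \<Rightarrow> ('x \<Rightarrow> 's)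
    \<Rightarrow> ('x \<Rightarrow> nat) \<Rightarrow> 'x \<Rightarrow> 'x \<Rightarrow> bool" where
  "kin_insep H T q g lx x1 x2 \<longleftrightarrow>
     lx x1 = lx x2 \<and>
     (lx x1 < H \<longrightarrow> (\<forall>a. obs_trans T q g x1 a = obs_trans T q g x2 a)) \<and>
     (\<forall>u. set_pmf u = {x. lx x = lx x1 - 1} \<times> UNIV \<longrightarrow>
          posterior T q g u x1 = posterior T q g u x2)"

definition N_KD :: "nat \<Rightarrow> ('s \<Rightarrow> 'a \<Rightarrow> 's pmf) \<Rightarrow> ('s \<Rightarrow> 'x pmf) \<Rightarrow> ('x \<Rightarrow> 's)
    \<Rightarrow> ('x \<Rightarrow> nat) \<Rightarrow> nat" where
  "N_KD H T q g lx = Max ((\<lambda>h. card ({x. lx x = h} //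
       {(x1, x2). lx x1 = h \<and> lx x2 = h \<and> kin_insep H T q g lx x1 x2})) ` {1..H})"

end

theory Submission
  imports Defs
begin

text \<open>
  For labels in \<open>{0, 1}\<close> whose conditional mean is \<open>f\<^sup>*\<close>, every \<open>[0, 1]\<close>-valued \<open>f\<close>
  satisfies \<open>E exp (-3/8 ((f - y)\<^sup>2 - (f\<^sup>* - y)\<^sup>2)) \<le> 1 - 3/16 E (f - f\<^sup>*)\<^sup>2\<close>; applied to the
  product over an i.i.d. sample, Markov's inequality makes it exponentially unlikely that such an
  \<open>f\<close> with large \<open>E (f - f\<^sup>*)\<^sup>2\<close> has empirical risk within \<open>2\<close> of that of \<open>f\<^sup>*\<close>. Rounding the
  weights of \<open>\<F>\<^sub>N\<close> to multiples of \<open>1/n\<close> gives a class of at most \<open>|\<Phi>|\<^sup>2 (n + 1)\<^bsup>N\<^sup>2 |A|\<^esup>\<close>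
  functions that approximates every empirical risk minimiser within \<open>2\<close> in empirical risk and
  \<open>2/n\<close> in \<open>E (f - f\<^sup>*)\<^sup>2\<close>, and a union bound over it yields the theorem. The contrastive
  distribution meets the hypothesis because \<open>T(s'|x,a) (1 - f\<^sup>*) = \<rho>(s') f\<^sup>*\<close>, which balances
  positive pairs against negative ones with the same latent next state \<open>s'\<close>.
\<close>

lemma exp_le_quadratic:
  fixes t :: real
  assumes "\<bar>t\<bar> \<le> 1"
  shows "exp t \<le> 1 + t + t\<^sup>2"
proof (cases "0 \<le> t")
  case True
  then show ?thesis using exp_bound[of t] assms by auto
next
  case False
  define s where "s = - t"
  have "0 \<le> s" using False by (simp add: s_def)
  have "0 \<le> 1 - s + s\<^sup>2"
    using sum_squares_ge_zero[of "s - 1/2" 0] by (simp add: power2_eq_square algebra_simps)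
  have "(1 - s + s\<^sup>2) * (1 + s + s\<^sup>2 / 2) = 1 + (s\<^sup>2 + s ^ 3 + s ^ 4) / 2"
    by (simp add: field_simps power2_eq_square power3_eq_cube power4_eq_xxxx)
  then have "1 \<le> (1 - s + s\<^sup>2) * (1 + s + s\<^sup>2 / 2)"
    using \<open>0 \<le> s\<close> by simp
  also have "\<dots> \<le> (1 - s + s\<^sup>2) * exp s"
    using \<open>0 \<le> s\<close> \<open>0 \<le> 1 - s + s\<^sup>2\<close> by (intro mult_left_mono exp_lower_Taylor_quadratic)
  finally have "1 \<le> (1 - s + s\<^sup>2) * exp s" .
  then have "exp (- s) \<le> 1 - s + s\<^sup>2"
    by (simp add: exp_minus field_simps)
  then show ?thesis by (simp add: s_def)
qed

lemma exp_sq_loss_gap_bernoulli: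
  fixes a p :: real
  assumes a: "0 \<le> a" "a \<le> 1" and p: "0 \<le> p" "p \<le> 1"
  shows "(1 - p) * exp (- (3/8) * (a\<^sup>2 - p\<^sup>2)) + p * exp (- (3/8) * ((a - 1)\<^sup>2 - (p - 1)\<^sup>2))
    \<le> 1 - 3/16 * (a - p)\<^sup>2"
proof -
  define t0 where "t0 = - (3/8) * (a\<^sup>2 - p\<^sup>2)"
  define t1 where "t1 = - (3/8) * ((a - 1)\<^sup>2 - (p - 1)\<^sup>2)"
  have gap: "\<bar>- (3/8) * (u - v)\<bar> \<le> 1" if "0 \<le> u" "u \<le> 1" "0 \<le> v" "v \<le> 1" for u v :: real
    using that by (simp add: abs_le_iff)
  have sq: "x\<^sup>2 \<le> 1" if "\<bar>x\<bar> \<le> 1" for x :: real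
    using that by (simp add: abs_square_le_1)
  have "\<bar>t0\<bar> \<le> 1" "\<bar>t1\<bar> \<le> 1"
    unfolding t0_def t1_def by (intro gap zero_le_power2 sq; use a p in auto)+
  then have "(1 - p) * exp t0 + p * exp t1 \<le> (1 - p) * (1 + t0 + t0\<^sup>2) + p * (1 + t1 + t1\<^sup>2)"
    using p by (intro add_mono mult_left_mono exp_le_quadratic) auto
  also have "\<dots> = 1 - 3/8 * (a - p)\<^sup>2 + 9/64 * ((a - p)\<^sup>2 * ((a - p)\<^sup>2 + 4 * p - 4 * p\<^sup>2))"
    unfolding t0_def t1_def by algebra
  also have "\<dots> \<le> 1 - 3/8 * (a - p)\<^sup>2 + 9/64 * ((a - p)\<^sup>2 * (4/3))"
  proof -
    \<comment> \<open>\<open>(a - p)\<^sup>2 \<le> max (p\<^sup>2) ((1 - p)\<^sup>2)\<close>, and both resulting quadratics in \<open>p\<close>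
      peak at \<open>4/3\<close>\<close>
    have "(a - p)\<^sup>2 + 4 * p - 4 * p\<^sup>2 \<le> 4/3"
    proof (cases "a \<le> p")
      case True
      then have "(p - a)\<^sup>2 \<le> p\<^sup>2"
        using a p by (intro power_mono) auto
      then have "(a - p)\<^sup>2 \<le> p\<^sup>2"
        by (simp add: power2_commute)
      moreover have "p\<^sup>2 + 4 * p - 4 * p\<^sup>2 \<le> 4/3"
        using sum_squares_ge_zero[of "3 * p - 2" 0] by (simp add: power2_eq_square algebra_simps)
      ultimately show ?thesis by linarith
    next
      case False
      then have "(a - p)\<^sup>2 \<le> (1 - p)\<^sup>2"
        using a p by (intro power_mono) auto
      moreover have "(1 - p)\<^sup>2 + 4 * p - 4 * p\<^sup>2 \<le> 4/3"
        using sum_squares_ge_zero[of "3 * p - 1" 0] by (simp add: power2_eq_square algebra_simps)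
      ultimately show ?thesis by linarith
    qed
    then have "(a - p)\<^sup>2 * ((a - p)\<^sup>2 + 4 * p - 4 * p\<^sup>2) \<le> (a - p)\<^sup>2 * (4/3)"
      by (intro mult_left_mono) auto
    then show ?thesis
      by linarith
  qed
  also have "\<dots> = 1 - 3/16 * (a - p)\<^sup>2"
    by simp
  finally show ?thesis
    by (simp add: t0_def t1_def)
qed

lemma sq_diff_perturb_le:
  fixes a b c e :: real
  assumes "0 \<le> a" "a \<le> 1" "0 \<le> b" "b \<le> 1" "0 \<le> c" "c \<le> 1" "\<bar>a - b\<bar> \<le> e"
  shows "(a - c)\<^sup>2 \<le> (b - c)\<^sup>2 + 2 * e"
proof -
  have "(a - c)\<^sup>2 - (b - c)\<^sup>2 = (a - b) * (a + b - 2 * c)"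
    by (simp add: power2_eq_square algebra_simps)
  also have "\<dots> \<le> \<bar>a - b\<bar> * \<bar>a + b - 2 * c\<bar>"
    by (metis abs_ge_self abs_mult)
  also have "\<dots> \<le> e * 2"
    using assms by (intro mult_mono) auto
  finally show ?thesis by simp
qed

lemma abs_mult_le_of_unit:
  fixes k u B :: real
  assumes "\<bar>k\<bar> \<le> B" "\<bar>u\<bar> \<le> 1"
  shows "\<bar>k * u\<bar> \<le> B"
proof -
  have "\<bar>k\<bar> * \<bar>u\<bar> \<le> B * 1"
    using assms by (intro mult_mono) auto
  then show ?thesis by (simp add: abs_mult)
qed

lemma sq_diff_le_one:
  fixes u v :: real
  assumes "0 \<le> u" "u \<le> 1" "0 \<le> v" "v \<le> 1"
  shows "(u - v)\<^sup>2 \<le> 1"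
  using assms by (simp add: abs_square_le_1 abs_le_iff)

lemma exp_sq_gap_le:
  fixes u v :: real
  assumes "v\<^sup>2 \<le> 1"
  shows "exp (- (3/8) * (u\<^sup>2 - v\<^sup>2)) \<le> exp (3/8)"
proof -
  have "- (3/8) * (u\<^sup>2 - v\<^sup>2) = 3/8 * v\<^sup>2 - 3/8 * u\<^sup>2"
    by (simp add: algebra_simps)
  then have "- (3/8) * (u\<^sup>2 - v\<^sup>2) \<le> 3/8"
    using assms zero_le_power2[of u] by linarith
  then show ?thesis by simp
qed

lemma frac_add_range:
  fixes t r :: real
  assumes "0 \<le> t" "0 \<le> r"
  shows "0 \<le> t / (t + r)" "t / (t + r) \<le> 1"
  using assms by (auto simp: divide_le_eq_1)

lemma frac_add_balance:
  fixes t r :: real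
  assumes "0 \<le> t" "0 \<le> r"
  shows "t * (1 - t / (t + r)) = r * (t / (t + r))"
proof (cases "t + r = 0")
  case True
  then show ?thesis using assms by simp
next
  case False
  then show ?thesis by (simp add: field_simps)
qed

lemma grid_point_near:
  fixes w :: real and n :: nat
  assumes "0 \<le> w" "w \<le> 1" "0 < n"
  shows "\<exists>k\<le>n. \<bar>real k / real n - w\<bar> \<le> 1 / real n"
proof (intro exI conjI)
  define k where "k = nat \<lfloor>real n * w\<rfloor>"
  have k: "real k = of_int \<lfloor>real n * w\<rfloor>"
    using assms by (simp add: k_def)
  have "real n * w \<le> real n"
    using assms by (simp add: mult_left_le)
  then show "k \<le> n"
    using k by linarith
  have "\<bar>real k - real n * w\<bar> \<le> 1"
    using k by linarith
  then show "\<bar>real k / real n - w\<bar> \<le> 1 / real n"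
    using assms by (simp add: field_simps)
qed

lemma ln_Suc_le_two_ln:
  fixes n :: nat
  assumes "2 \<le> n"
  shows "ln (real n + 1) \<le> 2 * ln (real n)"
proof -
  have "real n + 1 \<le> real n * real n"
  proof -
    have "2 * real n \<le> real n * real n"
      using assms by (intro mult_right_mono) auto
    then show ?thesis
      using assms by linarith
  qed
  then have "ln (real n + 1) \<le> ln (real n * real n)"
    using assms by simp
  also have "\<dots> = 2 * ln (real n)"
    using assms by (simp add: ln_mult)
  finally show ?thesis .
qed

lemma integrable_pmf_bounded:
  fixes f :: "'b \<Rightarrow> real"
  assumes "\<And>x. x \<in> set_pmf M \<Longrightarrow> \<bar>f x\<bar> \<le> B"
  shows "integrable (measure_pmf M) f"
  by (rule measure_pmf.integrable_const_bound[where B = B]) (auto intro!: AE_pmfI assms)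

lemma abs_expectation_pmf_le:
  fixes f :: "'b \<Rightarrow> real"
  assumes "\<And>x. x \<in> set_pmf M \<Longrightarrow> \<bar>f x\<bar> \<le> B"
  shows "\<bar>measure_pmf.expectation M f\<bar> \<le> B"
proof -
  have "0 \<le> B"
    using assms set_pmf_not_empty[of M] by fastforce
  have "\<bar>measure_pmf.expectation M f\<bar> \<le> measure_pmf.expectation M (\<lambda>x. \<bar>f x\<bar>)"
    by (rule integral_abs_bound)
  also have "\<dots> \<le> measure_pmf.expectation M (\<lambda>_. B)"
    using assms \<open>0 \<le> B\<close> by (intro integral_mono_AE integrable_pmf_bounded[of _ _ B] AE_pmfI) auto
  finally show ?thesis by simp
qed

lemma expectation_bind_pmf:
  fixes f :: "'c \<Rightarrow> real"
  assumes bounded: "\<And>y. y \<in> set_pmf (bind_pmf M N) \<Longrightarrow> \<bar>f y\<bar> \<le> B"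
  shows "measure_pmf.expectation (bind_pmf M N) f =
    measure_pmf.expectation M (\<lambda>x. measure_pmf.expectation (N x) f)"
proof -
  define f' where "f' y = (if y \<in> set_pmf (bind_pmf M N) then f y else 0)" for y
  have "0 \<le> B"
    using bounded set_pmf_not_empty[of "bind_pmf M N"] by fastforce
  then have f'_bounded: "\<bar>f' y\<bar> \<le> B" for y
    using bounded by (simp add: f'_def)
  have "measure_pmf.expectation (bind_pmf M N) f = measure_pmf.expectation (bind_pmf M N) f'"
    by (intro integral_cong_AE AE_pmfI) (auto simp: f'_def)
  also have "\<dots> = measure_pmf.expectation M (\<lambda>x. measure_pmf.expectation (N x) f')"
    unfolding measure_pmf_bind
    using f'_bounded measurable_measure_pmf[of N]
    by (intro integral_bind[where K = "count_space UNIV" and B = B and B' = 1])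
       (auto intro: prob_space.finite_measure prob_space_measure_pmf)
  also have "\<dots> = measure_pmf.expectation M (\<lambda>x. measure_pmf.expectation (N x) f)"
    by (intro integral_cong_AE AE_pmfI integral_cong_AE[OF _ _ AE_pmfI]) (auto simp: f'_def)
  finally show ?thesis .
qed

lemma expectation_bind_pmf_finite:
  fixes f :: "'c \<Rightarrow> real" and M :: "'b::finite pmf"
  assumes "\<And>y. y \<in> set_pmf (bind_pmf M N) \<Longrightarrow> \<bar>f y\<bar> \<le> B"
  shows "measure_pmf.expectation (bind_pmf M N) f =
    (\<Sum>s\<in>UNIV. pmf M s * measure_pmf.expectation (N s) f)"
proof -
  have "measure_pmf.expectation (bind_pmf M N) f =
      measure_pmf.expectation M (\<lambda>s. measure_pmf.expectation (N s) f)"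
    by (rule expectation_bind_pmf[OF assms])
  also have "\<dots> = (\<Sum>s\<in>UNIV. pmf M s * measure_pmf.expectation (N s) f)"
    by (subst integral_measure_pmf_real[where A = UNIV]) (auto simp: mult.commute)
  finally show ?thesis .
qed

locale contrastive_sampling =
  fixes mu :: "'s::finite pmf" and T :: "'s \<Rightarrow> 'a::finite \<Rightarrow> 's pmf"
    and q :: "'s \<Rightarrow> 'x pmf" and g :: "'x \<Rightarrow> 's"
    and Psi :: "('x \<Rightarrow> 'a pmf) set" and h :: nat
  assumes decoder: "\<And>s x. x \<in> set_pmf (q s) \<Longrightarrow> g x = s"
begin

abbreviation "P \<equiv> trans_sample mu T q g Psi h"
abbreviation "D \<equiv> contrastive_dist mu T q g Psi h"
abbreviation "fs \<equiv> fstar mu T q g Psi h"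

definition state_action :: "('x \<times> 'a) pmf" where
  "state_action = bind_pmf (pmf_of_set Psi) (\<lambda>p. bind_pmf (rollin mu T q g p (h - 1))
     (\<lambda>x. map_pmf (\<lambda>a. (x, a)) (pmf_of_set UNIV)))"

definition next_state :: "'s pmf" where
  "next_state = bind_pmf state_action (\<lambda>(x, a). T (g x) a)"

definition latent_fstar :: "'x \<Rightarrow> 'a \<Rightarrow> 's \<Rightarrow> real" where
  "latent_fstar x a s = pmf (T (g x) a) s / (pmf (T (g x) a) s + pmf next_state s)"

lemma trans_sample_eq:
  "P = bind_pmf state_action (\<lambda>(x, a). map_pmf (\<lambda>x'. (x, a, x')) (obs_trans T q g x a))"
  by (simp add: trans_sample_def state_action_def bind_assoc_pmf map_pmf_def bind_return_pmf)

lemma map_pmf_decoder_bind: "map_pmf g (bind_pmf M q) = M"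
proof -
  have "map_pmf g (q s) = return_pmf s" for s
    by (simp add: map_pmf_eq_return_pmf_iff decoder)
  then show ?thesis
    by (simp add: map_bind_pmf bind_return_pmf')
qed

lemma next_obs_eq: "map_pmf (\<lambda>(x, a, x'). x') P = bind_pmf next_state q"
proof -
  have "map_pmf (\<lambda>(x, a, x'). x') P = bind_pmf state_action (\<lambda>(x, a). obs_trans T q g x a)"
    unfolding trans_sample_eq map_bind_pmf by (simp add: map_pmf_comp case_prod_unfold)
  also have "\<dots> = bind_pmf next_state q"
    unfolding next_state_def obs_trans_def bind_assoc_pmf by (simp add: case_prod_unfold)
  finally show ?thesis .
qed

lemma rho_eq_next_state: "rho mu T q g Psi h s = pmf next_state s"
proof -
  have "rho mu T q g Psi h s = measure_pmf.prob (map_pmf g (map_pmf (\<lambda>(x, a, x'). x') P)) {s}"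
    unfolding rho_def map_pmf_comp measure_map_pmf by (simp add: vimage_def case_prod_unfold)
  also have "\<dots> = pmf next_state s"
    by (simp add: next_obs_eq map_pmf_decoder_bind measure_pmf_single)
  finally show ?thesis .
qed

lemma fstar_eq_latent: "fs x a x' = latent_fstar x a (g x')"
  by (simp add: fstar_def latent_fstar_def rho_eq_next_state)

lemma latent_fstar_range: "0 \<le> latent_fstar x a s" "latent_fstar x a s \<le> 1"
  unfolding latent_fstar_def by (simp_all add: frac_add_range)

lemma fstar_range: "0 \<le> fs x a x' \<and> fs x a x' \<le> 1"
  using latent_fstar_range by (simp add: fstar_eq_latent)

lemma abs_mult_fstar_le:
  fixes c :: real
  assumes "\<bar>c\<bar> \<le> B"
  shows "\<bar>c * fs x a x'\<bar> \<le> B" "\<bar>c * (1 - fs x a x')\<bar> \<le> B"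
  using fstar_range[of x a x'] by (intro abs_mult_le_of_unit assms; auto)+

lemma latent_fstar_balance:
  "pmf (T (g x) a) s * (1 - latent_fstar x a s) = pmf next_state s * latent_fstar x a s"
  unfolding latent_fstar_def by (simp add: frac_add_balance)

lemma expectation_emission:
  fixes k :: "'x \<Rightarrow> real" and c :: "'s \<Rightarrow> real"
  shows "measure_pmf.expectation (q s) (\<lambda>x'. k x' * c (g x')) = measure_pmf.expectation (q s) k * c s"
proof -
  have "measure_pmf.expectation (q s) (\<lambda>x'. k x' * c (g x')) =
      measure_pmf.expectation (q s) (\<lambda>x'. k x' * c s)"
    by (intro integral_cong_AE AE_pmfI) (auto simp: decoder)
  then show ?thesis by simp
qed

lemma expectation_trans_sample:
  fixes k :: "'x \<times> 'a \<times> 'x \<Rightarrow> real"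
  assumes "\<And>z. \<bar>k z\<bar> \<le> B"
  shows "measure_pmf.expectation P k = measure_pmf.expectation state_action
    (\<lambda>(x, a). measure_pmf.expectation (obs_trans T q g x a) (\<lambda>x'. k (x, a, x')))"
  unfolding trans_sample_eq using assms
  by (subst expectation_bind_pmf[where B = B]) (auto simp: case_prod_unfold)

lemma expectation_next_obs:
  fixes k :: "'x \<Rightarrow> real"
  assumes "\<And>x'. \<bar>k x'\<bar> \<le> B"
  shows "measure_pmf.expectation P (\<lambda>(x, a, x'). k x') =
    (\<Sum>s\<in>UNIV. pmf next_state s * measure_pmf.expectation (q s) k)"
proof -
  have "measure_pmf.expectation P (\<lambda>(x, a, x'). k x') =
      measure_pmf.expectation (map_pmf (\<lambda>(x, a, x'). x') P) k"
    by (simp add: case_prod_unfold)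
  also have "\<dots> = (\<Sum>s\<in>UNIV. pmf next_state s * measure_pmf.expectation (q s) k)"
    unfolding next_obs_eq using assms by (rule expectation_bind_pmf_finite)
  finally show ?thesis .
qed

lemma fstar_balance:
  fixes k :: "'x \<Rightarrow> 'a \<Rightarrow> 'x \<Rightarrow> real"
  assumes k: "\<And>x a x'. \<bar>k x a x'\<bar> \<le> B"
  shows "measure_pmf.expectation P (\<lambda>(x, a, x'). k x a x' * (1 - fs x a x')) =
    measure_pmf.expectation P (\<lambda>(x1, a1, x1').
      measure_pmf.expectation P (\<lambda>(x2, a2, x2'). k x1 a1 x2' * fs x1 a1 x2'))"
proof -
  define c where "c x a =
    (\<Sum>s\<in>UNIV. pmf next_state s * (measure_pmf.expectation (q s) (k x a) * latent_fstar x a s))"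
    for x a
  note k_fs = abs_mult_fstar_le[OF k]
  have inner: "measure_pmf.expectation P (\<lambda>(x2, a2, x2'). k x a x2' * fs x a x2') = c x a" for x a
    using k_fs(1)
    by (simp add: expectation_next_obs[where B = B] fstar_eq_latent expectation_emission c_def)
  have kernel: "measure_pmf.expectation (obs_trans T q g x a) (\<lambda>x'. k x a x' * (1 - fs x a x')) = c x a"
    for x a
  proof -
    have "measure_pmf.expectation (obs_trans T q g x a) (\<lambda>x'. k x a x' * (1 - fs x a x')) =
        (\<Sum>s\<in>UNIV. pmf (T (g x) a) s * (measure_pmf.expectation (q s) (k x a) * (1 - latent_fstar x a s)))"
      unfolding obs_trans_def using k_fs(2)
      by (simp add: expectation_bind_pmf_finite[where B = B] fstar_eq_latent
          expectation_emission[where c = "\<lambda>s. 1 - latent_fstar x a s"])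
    also have "\<dots> = c x a"
      unfolding c_def by (intro sum.cong refl) (metis latent_fstar_balance mult.left_commute)
    finally show ?thesis .
  qed
  have "\<bar>measure_pmf.expectation P (\<lambda>(x2, a2, x2'). k x a x2' * fs x a x2')\<bar> \<le> B" for x a
    using k_fs(1) by (intro abs_expectation_pmf_le) (auto simp: case_prod_unfold)
  then have "measure_pmf.expectation P (\<lambda>(x1, a1, x1').
      measure_pmf.expectation P (\<lambda>(x2, a2, x2'). k x1 a1 x2' * fs x1 a1 x2')) =
      measure_pmf.expectation state_action (\<lambda>(x, a). c x a)"
    by (subst expectation_trans_sample[where B = B]) (auto simp: inner[unfolded case_prod_unfold] case_prod_unfold)
  moreover have "measure_pmf.expectation P (\<lambda>(x, a, x'). k x a x' * (1 - fs x a x')) =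
      measure_pmf.expectation state_action (\<lambda>(x, a). c x a)"
    using k_fs(2) by (subst expectation_trans_sample[where B = B]) (auto simp: kernel case_prod_unfold)
  ultimately show ?thesis by simp
qed

lemma contrastive_dist_label: "(x, a, x', y) \<in> set_pmf D \<Longrightarrow> y = 0 \<or> y = 1"
  by (auto simp: contrastive_dist_def split: if_splits)

lemma expectation_contrastive_dist:
  fixes \<phi> :: "'x \<times> 'a \<times> 'x \<times> real \<Rightarrow> real"
  assumes \<phi>: "\<And>x a x' y. y = 0 \<or> y = 1 \<Longrightarrow> \<bar>\<phi> (x, a, x', y)\<bar> \<le> B"
  shows "measure_pmf.expectation D \<phi> = measure_pmf.expectation P (\<lambda>(x1, a1, x1').
    (\<phi> (x1, a1, x1', 1) + measure_pmf.expectation P (\<lambda>(x2, a2, x2'). \<phi> (x1, a1, x2', 0))) / 2)"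
proof -
  have label_pair: "measure_pmf.expectation
      (map_pmf (\<lambda>b. if b then (x1, a1, x1', 1) else (x1, a1, x2', 0)) (bernoulli_pmf (1/2))) \<phi> =
      (\<phi> (x1, a1, x1', 1) + \<phi> (x1, a1, x2', 0)) / 2" for x1 a1 x1' x2'
    by (simp add: add_divide_distrib)
  have second: "measure_pmf.expectation (bind_pmf P (\<lambda>(x2, a2, x2').
      map_pmf (\<lambda>b. if b then (x1, a1, x1', 1) else (x1, a1, x2', 0)) (bernoulli_pmf (1/2)))) \<phi> =
      (\<phi> (x1, a1, x1', 1) + measure_pmf.expectation P (\<lambda>(x2, a2, x2'). \<phi> (x1, a1, x2', 0))) / 2"
    for x1 a1 x1'
  proof -
    have "integrable (measure_pmf P) (\<lambda>(x2, a2, x2'). \<phi> (x1, a1, x2', 0))"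
      using \<phi> by (intro integrable_pmf_bounded[where B = B]) auto
    then show ?thesis
      using \<phi> by (subst expectation_bind_pmf[where B = B])
        (auto simp: label_pair case_prod_unfold split: if_splits)
  qed
  have "measure_pmf.expectation D \<phi> = measure_pmf.expectation P (\<lambda>(x1, a1, x1').
      measure_pmf.expectation (bind_pmf P (\<lambda>(x2, a2, x2').
        map_pmf (\<lambda>b. if b then (x1, a1, x1', 1) else (x1, a1, x2', 0)) (bernoulli_pmf (1/2)))) \<phi>)"
    unfolding contrastive_dist_def using \<phi>
    by (subst expectation_bind_pmf[where B = B]) (auto simp: case_prod_unfold split: if_splits)
  also have "\<dots> = measure_pmf.expectation P (\<lambda>(x1, a1, x1').
      (\<phi> (x1, a1, x1', 1) + measure_pmf.expectation P (\<lambda>(x2, a2, x2'). \<phi> (x1, a1, x2', 0))) / 2)"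
    by (intro arg_cong[where f = "measure_pmf.expectation P"] ext) (clarsimp simp: second)
  finally show ?thesis .
qed

lemma fstar_regression:
  fixes k :: "'x \<Rightarrow> 'a \<Rightarrow> 'x \<Rightarrow> real"
  assumes k: "\<And>x a x'. \<bar>k x a x'\<bar> \<le> B"
  shows "measure_pmf.expectation D (\<lambda>(x, a, x', y). (y - fs x a x') * k x a x') = 0"
proof -
  have bounded: "\<bar>(y - fs x a x') * k x a x'\<bar> \<le> B" if "y = 0 \<or> y = 1" for x a x' y
    using that fstar_range[of x a x'] by (subst mult.commute) (intro abs_mult_le_of_unit k; auto)
  define A where "A = (\<lambda>(x, a, x'). k x a x' * (1 - fs x a x'))"
  define C :: "'x \<times> 'a \<times> 'x \<Rightarrow> real" where "C = (\<lambda>(x1, a1, x1'). measure_pmf.expectation P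
    (\<lambda>(x2, a2, x2'). k x1 a1 x2' * fs x1 a1 x2'))"
  have "measure_pmf.expectation D (\<lambda>(x, a, x', y). (y - fs x a x') * k x a x') =
      measure_pmf.expectation P (\<lambda>z. (A z - C z) / 2)"
    using bounded by (subst expectation_contrastive_dist[where B = B])
      (auto simp: A_def C_def case_prod_unfold algebra_simps)
  also have "\<dots> = (measure_pmf.expectation P A - measure_pmf.expectation P C) / 2"
  proof -
    have "\<bar>C z\<bar> \<le> B" for z
      using abs_mult_fstar_le(1)[OF k] by (auto simp: C_def case_prod_unfold intro!: abs_expectation_pmf_le)
    then have "integrable (measure_pmf P) C"
      by (rule integrable_pmf_bounded)
    moreover have "integrable (measure_pmf P) A"
      using abs_mult_fstar_le(2)[OF k] by (intro integrable_pmf_bounded[where B = B]) (auto simp: A_def)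
    ultimately show ?thesis by simp
  qed
  also have "\<dots> = 0"
    using fstar_balance[OF k] by (simp add: A_def C_def)
  finally show ?thesis .
qed

end

definition grid_class ::
    "nat \<Rightarrow> nat \<Rightarrow> ('x \<Rightarrow> nat) set \<Rightarrow> ('x \<Rightarrow> 'a \<Rightarrow> 'x \<Rightarrow> real) set" where
  "grid_class N n Phi = (\<lambda>(w, phiF, phiB) x a x'. w (phiF x, a, phiB x')) `
     ((({..<N} \<times> UNIV \<times> {..<N}) \<rightarrow>\<^sub>E (\<lambda>k. real k / real n) ` {..n}) \<times> Phi \<times> Phi)"

lemma finite_grid_class:
  assumes "finite Phi"
  shows "finite (grid_class N n Phi :: ('x \<Rightarrow> 'a::finite \<Rightarrow> 'x \<Rightarrow> real) set)"
  using assms by (simp add: grid_class_def finite_PiE)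

lemma card_grid_class:
  assumes "finite Phi"
  shows "card (grid_class N n Phi :: ('x \<Rightarrow> 'a::finite \<Rightarrow> 'x \<Rightarrow> real) set)
    \<le> card Phi ^ 2 * (n + 1) ^ (N * CARD('a) * N)"
proof -
  let ?cells = "{..<N} \<times> (UNIV :: 'a set) \<times> {..<N}"
  let ?values = "(\<lambda>k. real k / real n) ` {..n}"
  have "card (grid_class N n Phi :: ('x \<Rightarrow> 'a \<Rightarrow> 'x \<Rightarrow> real) set)
      \<le> card ((?cells \<rightarrow>\<^sub>E ?values) \<times> Phi \<times> Phi)"
    unfolding grid_class_def using assms by (intro card_image_le) (simp add: finite_PiE)
  also have "\<dots> = card ?values ^ (N * CARD('a) * N) * card Phi ^ 2"
    by (simp add: card_cartesian_product card_PiE power2_eq_square mult.assoc)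
  also have "\<dots> \<le> (n + 1) ^ (N * CARD('a) * N) * card Phi ^ 2"
    using card_image_le[of "{..n}" "\<lambda>k. real k / real n"] by (simp add: power_mono)
  finally show ?thesis by (simp add: mult.commute)
qed

lemma F_set_range:
  assumes Phi: "\<forall>phi\<in>Phi. \<forall>x. phi x < N" and "f \<in> F_set N Phi"
  shows "0 \<le> f x a x' \<and> f x a x' \<le> 1"
proof -
  obtain w phiF phiB where "w \<in> W_set N" "phiF \<in> Phi" "phiB \<in> Phi"
    and "f = (\<lambda>x a x'. w (phiF x) a (phiB x'))"
    using assms(2) by (auto simp: F_set_def)
  then show ?thesis
    using Phi by (simp add: W_set_def)
qed

lemma grid_class_range:
  assumes Phi: "\<forall>phi\<in>Phi. \<forall>x. phi x < N" and "f \<in> grid_class N n Phi"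
  shows "0 \<le> f x a x' \<and> f x a x' \<le> 1"
proof -
  obtain W phiF phiB where W: "W \<in> ({..<N} \<times> UNIV \<times> {..<N}) \<rightarrow>\<^sub>E (\<lambda>k. real k / real n) ` {..n}"
    and "phiF \<in> Phi" "phiB \<in> Phi" and f: "f = (\<lambda>x a x'. W (phiF x, a, phiB x'))"
    using assms(2) by (auto simp: grid_class_def)
  then have "W (phiF x, a, phiB x') \<in> (\<lambda>k. real k / real n) ` {..n}"
    using Phi by (intro PiE_mem[OF W]) auto
  then obtain k where "k \<le> n" "f x a x' = real k / real n"
    by (auto simp: f)
  then show ?thesis
    by (cases "n = 0") (simp_all add: divide_le_eq_1)
qed

lemma grid_class_approx:
  assumes "0 < n" and Phi: "\<forall>phi\<in>Phi. \<forall>x. phi x < N" and "f \<in> F_set N Phi"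
  shows "\<exists>f'\<in>grid_class N n Phi. \<forall>x a x'. \<bar>f' x a x' - f x a x'\<bar> \<le> 1 / real n"
proof -
  let ?cells = "{..<N} \<times> UNIV \<times> {..<N}"
  obtain w phiF phiB where w: "w \<in> W_set N" and phi: "phiF \<in> Phi" "phiB \<in> Phi"
    and f: "f = (\<lambda>x a x'. w (phiF x) a (phiB x'))"
    using assms(3) by (auto simp: F_set_def)
  let ?w = "\<lambda>c. w (fst c) (fst (snd c)) (snd (snd c))"
  have "\<forall>c\<in>?cells. \<exists>k. k \<le> n \<and> \<bar>real k / real n - ?w c\<bar> \<le> 1 / real n"
    using w \<open>0 < n\<close> by (auto simp: W_set_def intro!: grid_point_near)
  then have "\<exists>K. \<forall>c\<in>?cells. K c \<le> n \<and> \<bar>real (K c) / real n - ?w c\<bar> \<le> 1 / real n"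
    by (rule bchoice)
  then obtain K where K: "\<forall>c\<in>?cells. K c \<le> n \<and> \<bar>real (K c) / real n - ?w c\<bar> \<le> 1 / real n" ..
  define W where "W = restrict (\<lambda>c. real (K c) / real n) ?cells"
  have "W \<in> ?cells \<rightarrow>\<^sub>E (\<lambda>k. real k / real n) ` {..n}"
    using K by (auto simp: W_def)
  show ?thesis
  proof
    show "\<forall>x a x'. \<bar>W (phiF x, a, phiB x') - f x a x'\<bar> \<le> 1 / real n"
      using K Phi phi by (auto simp: W_def f)
    show "(\<lambda>x a x'. W (phiF x, a, phiB x')) \<in> grid_class N n Phi"
      unfolding grid_class_def using phi \<open>W \<in> _\<close> by (intro image_eqI[where x = "(W, phiF, phiB)"]) auto
  qed
qed

lemma emp_risk_perturb:
  assumes S: "\<And>i x a x' y. i < n \<Longrightarrow> S i = (x, a, x', y) \<Longrightarrow> 0 \<le> y \<and> y \<le> 1"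
    and f: "\<And>x a x'. 0 \<le> f x a x' \<and> f x a x' \<le> 1"
    and f': "\<And>x a x'. 0 \<le> f' x a x' \<and> f' x a x' \<le> 1"
    and close: "\<And>x a x'. \<bar>f x a x' - f' x a x'\<bar> \<le> e"
  shows "emp_risk f n S \<le> emp_risk f' n S + 2 * e * real n"
proof -
  have "emp_risk f n S \<le> (\<Sum>i<n. (case S i of (x, a, x', y) \<Rightarrow> (f' x a x' - y)\<^sup>2) + 2 * e)"
    unfolding emp_risk_def
  proof (intro sum_mono)
    fix i assume "i \<in> {..<n}"
    obtain x a x' y where Si: "S i = (x, a, x', y)" by (cases "S i") auto
    then have "0 \<le> y \<and> y \<le> 1" using S \<open>i \<in> {..<n}\<close> by blast
    then show "(case S i of (x, a, x', y) \<Rightarrow> (f x a x' - y)\<^sup>2)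
        \<le> (case S i of (x, a, x', y) \<Rightarrow> (f' x a x' - y)\<^sup>2) + 2 * e"
      using f[of x a x'] f'[of x a x'] close[of x a x'] by (simp add: Si sq_diff_perturb_le)
  qed
  also have "\<dots> = emp_risk f' n S + 2 * e * real n"
    by (simp add: emp_risk_def sum.distrib)
  finally show ?thesis .
qed

lemma union_bound_arith:
  fixes m n K :: nat and G delta :: real
  assumes "1 \<le> m" "2 \<le> n" "0 < delta" "delta < 1"
    and G: "G \<le> real m ^ 2 * real (n + 1) ^ K"
  shows "G * exp (3/4 - 3/16 * real n *
      (16 * (ln (real m) + real K * ln (real n) + ln (2 / delta)) / real n - 2 / real n)) \<le> delta"
proof -
  define L where "L = real m ^ 2 * real (n + 1) ^ K"
  define S where "S = ln (real m) + real K * ln (real n) + ln (2 / delta)"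
  define E where "E = 3/4 - 3/16 * real n * (16 * S / real n - 2 / real n)"
  have "0 < L" using assms by (simp add: L_def)
  have E: "E = 9/8 - 3 * S"
    using assms by (simp add: E_def field_simps)
  have ln_L: "ln L = 2 * ln (real m) + real K * ln (real n + 1)"
    using assms by (simp add: L_def ln_mult ln_realpow add.commute)
  have ln_2_delta: "ln (2 / delta) = ln 2 - ln delta"
    using assms by (simp add: ln_div)
  have "real K * ln (real n + 1) \<le> 2 * (real K * ln (real n))"
    using mult_left_mono[OF ln_Suc_le_two_ln[OF \<open>2 \<le> n\<close>], of "real K"] by simp
  moreover have "0 \<le> ln (real m)" "0 \<le> real K * ln (real n)" "ln delta < 0"
    using assms by auto
  moreover have "9/8 - 3 * (A + X + (l2 - ld)) \<le> ld - (2 * A + Y)"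
    if "Y \<le> 2 * X" "0 \<le> A" "0 \<le> X" "ld < 0" "2/3 \<le> l2" for A X Y l2 ld :: real
    using that by (simp add: algebra_simps)
  ultimately have "E \<le> ln delta - ln L"
    unfolding E ln_L S_def ln_2_delta using ln2_ge_two_thirds by blast
  then have "exp E \<le> exp (ln delta - ln L)"
    by simp
  also have "\<dots> = delta / L"
    using \<open>0 < L\<close> \<open>0 < delta\<close> by (simp add: exp_diff)
  finally have "exp E \<le> delta / L" .
  have "G * exp E \<le> L * exp E"
    using G by (simp add: L_def)
  also have "\<dots> \<le> L * (delta / L)"
    using \<open>exp E \<le> delta / L\<close> \<open>0 < L\<close> by (intro mult_left_mono) auto
  also have "\<dots> = delta"
    using \<open>0 < L\<close> by simp
  finally show ?thesis
    by (simp add: E_def S_def)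
qed

locale binary_regression =
  fixes D :: "('x \<times> 'a::finite \<times> 'x \<times> real) pmf" and fs :: "'x \<Rightarrow> 'a \<Rightarrow> 'x \<Rightarrow> real"
  assumes label: "\<And>x a x' y. (x, a, x', y) \<in> set_pmf D \<Longrightarrow> y = 0 \<or> y = 1"
    and regression: "\<And>k B. (\<And>x a x'. \<bar>k x a x'\<bar> \<le> B) \<Longrightarrow>
      measure_pmf.expectation D (\<lambda>(x, a, x', y). (y - fs x a x') * k x a x') = 0"
    and fs_range: "\<And>x a x'. 0 \<le> fs x a x' \<and> fs x a x' \<le> 1"
begin

definition mean_sq_dev :: "('x \<Rightarrow> 'a \<Rightarrow> 'x \<Rightarrow> real) \<Rightarrow> real" where
  "mean_sq_dev f = measure_pmf.expectation D (\<lambda>(x, a, x', y). (f x a x' - fs x a x')\<^sup>2)"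

definition loss_gap :: "('x \<Rightarrow> 'a \<Rightarrow> 'x \<Rightarrow> real) \<Rightarrow> 'x \<times> 'a \<times> 'x \<times> real \<Rightarrow> real" where
  "loss_gap f = (\<lambda>(x, a, x', y). (f x a x' - y)\<^sup>2 - (fs x a x' - y)\<^sup>2)"

lemma sq_fs_label_le: "c = 0 \<or> c = 1 \<Longrightarrow> (fs x a x' - c)\<^sup>2 \<le> 1"
  using fs_range[of x a x'] by (auto simp: abs_square_le_1)

lemma exp_loss_gap_le:
  assumes "z \<in> set_pmf D"
  shows "exp (- (3/8) * loss_gap f z) \<le> exp (3/8)"
proof -
  obtain x a x' y where z: "z = (x, a, x', y)" by (cases z) auto
  then have "(fs x a x' - y)\<^sup>2 \<le> 1"
    using assms label sq_fs_label_le by blast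
  then show ?thesis
    unfolding z loss_gap_def prod.case by (rule exp_sq_gap_le)
qed

lemma integrable_sq_dev:
  assumes "\<And>x a x'. 0 \<le> f x a x' \<and> f x a x' \<le> 1"
  shows "integrable (measure_pmf D) (\<lambda>(x, a, x', y). (f x a x' - fs x a x')\<^sup>2)"
  using assms fs_range by (intro integrable_pmf_bounded[where B = 1]) (auto intro!: sq_diff_le_one)

lemma mean_sq_dev_le_one:
  assumes "\<And>x a x'. 0 \<le> f x a x' \<and> f x a x' \<le> 1"
  shows "mean_sq_dev f \<le> 1"
proof -
  have "\<bar>mean_sq_dev f\<bar> \<le> 1"
    unfolding mean_sq_dev_def using assms fs_range
    by (intro abs_expectation_pmf_le) (auto intro!: sq_diff_le_one)
  then show ?thesis by simp
qed

lemma mean_sq_dev_perturb: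
  assumes f: "\<And>x a x'. 0 \<le> f x a x' \<and> f x a x' \<le> 1"
    and f': "\<And>x a x'. 0 \<le> f' x a x' \<and> f' x a x' \<le> 1"
    and close: "\<And>x a x'. \<bar>f x a x' - f' x a x'\<bar> \<le> e"
  shows "mean_sq_dev f \<le> mean_sq_dev f' + 2 * e"
proof -
  have "mean_sq_dev f \<le> measure_pmf.expectation D
      (\<lambda>z. (case z of (x, a, x', y) \<Rightarrow> (f' x a x' - fs x a x')\<^sup>2) + 2 * e)"
    unfolding mean_sq_dev_def
  proof (rule integral_mono)
    show "integrable (measure_pmf D) (\<lambda>(x, a, x', y). (f x a x' - fs x a x')\<^sup>2)"
      using f by (rule integrable_sq_dev)
    show "integrable (measure_pmf D)
        (\<lambda>z. (case z of (x, a, x', y) \<Rightarrow> (f' x a x' - fs x a x')\<^sup>2) + 2 * e)"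
      using integrable_sq_dev[OF f'] by simp
    show "(case z of (x, a, x', y) \<Rightarrow> (f x a x' - fs x a x')\<^sup>2)
        \<le> (case z of (x, a, x', y) \<Rightarrow> (f' x a x' - fs x a x')\<^sup>2) + 2 * e" for z
      using f f' fs_range close by (auto intro!: sq_diff_perturb_le split: prod.split)
  qed
  also have "\<dots> = mean_sq_dev f' + 2 * e"
    unfolding mean_sq_dev_def using integrable_sq_dev[OF f'] by simp
  finally show ?thesis .
qed

lemma expectation_exp_loss_gap_le:
  assumes f: "\<And>x a x'. 0 \<le> f x a x' \<and> f x a x' \<le> 1"
  shows "measure_pmf.expectation D (\<lambda>z. exp (- (3/8) * loss_gap f z)) \<le> 1 - 3/16 * mean_sq_dev f"
proof -
  have int_f: "integrable (measure_pmf D) (\<lambda>(x, a, x', y). (f x a x' - fs x a x')\<^sup>2)"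
    using f by (rule integrable_sq_dev)
  define e where "e c x a x' = exp (- (3/8) * ((f x a x' - c)\<^sup>2 - (fs x a x' - c)\<^sup>2))" for c x a x'
  have e_range: "0 \<le> e c x a x' \<and> e c x a x' \<le> exp (3/8)" if "c = 0 \<or> c = 1" for c x a x'
    unfolding e_def by (intro conjI exp_ge_zero exp_sq_gap_le sq_fs_label_le that)
  define M :: "'x \<times> 'a \<times> 'x \<times> real \<Rightarrow> real"
    where "M = (\<lambda>(x, a, x', y). (1 - fs x a x') * e 0 x a x' + fs x a x' * e 1 x a x')"
  define k where "k x a x' = e 1 x a x' - e 0 x a x'" for x a x'
  define R where "R = (\<lambda>(x, a, x', y). (y - fs x a x') * k x a x')"
  have k_bound: "\<bar>k x a x'\<bar> \<le> exp (3/8)" for x a x'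
    using e_range[of 0 x a x'] e_range[of 1 x a x'] by (simp add: k_def abs_le_iff)
  \<comment> \<open>for a label \<open>y \<in> {0, 1}\<close>, \<open>e y = e 0 + y (e 1 - e 0)\<close>; \<open>M\<close> is its conditional mean\<close>
  have decomp: "exp (- (3/8) * loss_gap f z) = M z + R z" if "z \<in> set_pmf D" for z
  proof -
    obtain x a x' y where z: "z = (x, a, x', y)" by (cases z) auto
    then have "y = 0 \<or> y = 1" using label that by blast
    then show ?thesis
      by (auto simp: z loss_gap_def M_def R_def k_def e_def algebra_simps)
  qed
  have M_bound: "\<bar>M z\<bar> \<le> exp (3/8)" for z
  proof -
    obtain x a x' y where z: "z = (x, a, x', y)" by (cases z) auto
    have "(1 - fs x a x') * e 0 x a x' + fs x a x' * e 1 x a x'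
        \<le> (1 - fs x a x') * exp (3/8) + fs x a x' * exp (3/8)"
      using fs_range[of x a x'] e_range[of 0 x a x'] e_range[of 1 x a x']
      by (intro add_mono mult_left_mono) auto
    moreover have "0 \<le> (1 - fs x a x') * e 0 x a x' + fs x a x' * e 1 x a x'"
      using fs_range[of x a x'] e_range[of 0 x a x'] e_range[of 1 x a x'] by simp
    ultimately show ?thesis
      by (simp add: z M_def algebra_simps)
  qed
  have R_bound: "\<bar>R z\<bar> \<le> exp (3/8)" if "z \<in> set_pmf D" for z
  proof -
    obtain x a x' y where z: "z = (x, a, x', y)" by (cases z) auto
    then have "\<bar>y - fs x a x'\<bar> \<le> 1"
      using label that fs_range[of x a x'] by fastforce
    then show ?thesis
      using k_bound[of x a x'] abs_mult_le_of_unit by (simp add: z R_def mult.commute)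
  qed
  have "measure_pmf.expectation D (\<lambda>z. exp (- (3/8) * loss_gap f z)) =
      measure_pmf.expectation D (\<lambda>z. M z + R z)"
    by (intro integral_cong_AE AE_pmfI decomp) simp_all
  also have "\<dots> = measure_pmf.expectation D M + measure_pmf.expectation D R"
    using M_bound R_bound by (intro Bochner_Integration.integral_add integrable_pmf_bounded) auto
  also have "measure_pmf.expectation D R = 0"
    unfolding R_def by (rule regression[OF k_bound])
  also have "measure_pmf.expectation D M \<le>
      measure_pmf.expectation D (\<lambda>(x, a, x', y). 1 - 3/16 * (f x a x' - fs x a x')\<^sup>2)"
  proof (intro integral_mono)
    show "integrable (measure_pmf D) M"
      using M_bound by (intro integrable_pmf_bounded) auto
    show "integrable (measure_pmf D) (\<lambda>(x, a, x', y). 1 - 3/16 * (f x a x' - fs x a x')\<^sup>2)"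
      using int_f by (simp add: case_prod_unfold)
    show "M z \<le> (case z of (x, a, x', y) \<Rightarrow> 1 - 3/16 * (f x a x' - fs x a x')\<^sup>2)" for z
      using f fs_range exp_sq_loss_gap_bernoulli by (auto simp: M_def e_def split: prod.splits)
  qed
  also have "\<dots> = 1 - 3/16 * mean_sq_dev f"
    using int_f by (simp add: mean_sq_dev_def case_prod_unfold)
  finally show ?thesis by simp
qed

lemma prob_emp_risk_le:
  assumes f: "\<And>x a x'. 0 \<le> f x a x' \<and> f x a x' \<le> 1"
  shows "measure_pmf.prob (Pi_pmf {..<n} undefined (\<lambda>_. D))
      {S. emp_risk f n S \<le> emp_risk fs n S + c}
    \<le> exp (3/8 * c - 3/16 * real n * mean_sq_dev f)"
proof -
  let ?Q = "Pi_pmf {..<n} undefined (\<lambda>_. D)"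
  define Z where "Z S = (\<Prod>i\<in>{..<n}. exp (- (3/8) * loss_gap f (S i)))" for S
  have Z_eq: "Z S = exp (- (3/8) * (emp_risk f n S - emp_risk fs n S))" for S
  proof -
    have "emp_risk f n S - emp_risk fs n S = (\<Sum>i<n. loss_gap f (S i))"
      by (simp add: emp_risk_def loss_gap_def sum_subtractf case_prod_unfold)
    then show ?thesis
      by (simp add: Z_def sum_distrib_left exp_sum)
  qed
  have int: "integrable (measure_pmf D) (\<lambda>z. exp (- (3/8) * loss_gap f z))"
    using exp_loss_gap_le by (intro integrable_pmf_bounded[where B = "exp (3/8)"]) auto
  have EZ: "measure_pmf.expectation ?Q Z = measure_pmf.expectation D (\<lambda>z. exp (- (3/8) * loss_gap f z)) ^ n"
    unfolding Z_def using int by (subst expectation_prod_Pi_pmf) auto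
  have "measure_pmf.expectation D (\<lambda>z. exp (- (3/8) * loss_gap f z)) \<le> 1 - 3/16 * mean_sq_dev f"
    using f by (rule expectation_exp_loss_gap_le)
  moreover have "0 \<le> measure_pmf.expectation D (\<lambda>z. exp (- (3/8) * loss_gap f z))"
    by simp
  ultimately have "measure_pmf.expectation D (\<lambda>z. exp (- (3/8) * loss_gap f z)) ^ n
      \<le> exp (- (3/16) * mean_sq_dev f) ^ n"
    using exp_ge_add_one_self[of "- (3/16) * mean_sq_dev f"] by (intro power_mono) auto
  also have "\<dots> = exp (- (3/16) * real n * mean_sq_dev f)"
    by (simp add: exp_of_nat_mult[symmetric] algebra_simps)
  finally have EZ_le: "measure_pmf.expectation ?Q Z \<le> exp (- (3/16) * real n * mean_sq_dev f)"
    by (simp add: EZ)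
  have int_Z: "integrable (measure_pmf ?Q) Z"
    unfolding Z_def using int by (intro integrable_prod_Pi_pmf) auto
  have events: "{S. emp_risk f n S \<le> emp_risk fs n S + c} = {S \<in> space ?Q. exp (- (3/8) * c) \<le> Z S}"
    by (auto simp: Z_eq)
  have "measure_pmf.prob ?Q {S. emp_risk f n S \<le> emp_risk fs n S + c}
      \<le> measure_pmf.expectation ?Q Z / exp (- (3/8) * c)"
    unfolding events by (rule integral_Markov_inequality_measure[OF int_Z]) (auto simp: Z_def prod_nonneg)
  also have "\<dots> \<le> exp (- (3/16) * real n * mean_sq_dev f) / exp (- (3/8) * c)"
    using EZ_le by (simp add: divide_right_mono)
  also have "\<dots> = exp (3/8 * c - 3/16 * real n * mean_sq_dev f)"
    by (simp add: exp_diff[symmetric])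
  finally show ?thesis .
qed

lemma set_Pi_pmf_label:
  fixes n :: nat
  assumes "S \<in> set_pmf (Pi_pmf {..<n} undefined (\<lambda>_. D))" "i < n" "S i = (x, a, x', y)"
  shows "y = 0 \<or> y = 1"
proof -
  have "S i \<in> set_pmf D"
    using assms(1,2) by (auto simp: set_Pi_pmf PiE_dflt_def)
  then show ?thesis
    using assms(3) label by simp
qed

lemma erm_grid_witness:
  assumes "0 < n" and Phi: "\<forall>phi\<in>Phi. \<forall>x. phi x < N" and fs: "fs \<in> F_set N Phi"
    and S: "S \<in> set_pmf (Pi_pmf {..<n} undefined (\<lambda>_. D))"
    and f: "f \<in> F_set N Phi" and erm: "\<forall>f'\<in>F_set N Phi. emp_risk f n S \<le> emp_risk f' n S"
  shows "\<exists>g\<in>grid_class N n Phi.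
    emp_risk g n S \<le> emp_risk fs n S + 2 \<and> mean_sq_dev f \<le> mean_sq_dev g + 2 / real n"
proof -
  obtain g where g: "g \<in> grid_class N n Phi" and close: "\<And>x a x'. \<bar>g x a x' - f x a x'\<bar> \<le> 1 / real n"
    using grid_class_approx[OF \<open>0 < n\<close> Phi f] by blast
  note f_range = F_set_range[OF Phi f] and g_range = grid_class_range[OF Phi g]
  have "emp_risk g n S \<le> emp_risk f n S + 2 * (1 / real n) * real n"
  proof (rule emp_risk_perturb)
    show "0 \<le> y \<and> y \<le> 1" if "i < n" "S i = (x, a, x', y)" for i x a x' y
      using set_Pi_pmf_label[OF S that] by auto
  qed (use f_range g_range close in auto)
  also have "\<dots> \<le> emp_risk fs n S + 2"
    using erm fs \<open>0 < n\<close> by simp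
  finally have "emp_risk g n S \<le> emp_risk fs n S + 2" .
  moreover have "mean_sq_dev f \<le> mean_sq_dev g + 2 * (1 / real n)"
  proof (rule mean_sq_dev_perturb)
    show "\<bar>f x a x' - g x a x'\<bar> \<le> 1 / real n" for x a x'
      using close[of x a x'] by (simp add: abs_minus_commute)
  qed (use f_range g_range in auto)
  ultimately show ?thesis
    using g by auto
qed

lemma prob_erm_mean_sq_dev_gt_le:
  fixes n N :: nat
  assumes Phi_fin: "finite Phi" and Phi: "\<forall>phi\<in>Phi. \<forall>x. phi x < N" and fs: "fs \<in> F_set N Phi"
    and delta: "0 < delta" "delta < 1" and "2 \<le> n"
  defines "\<Delta> \<equiv> 16 * (ln (real (card Phi)) + real N ^ 2 * real CARD('a) * ln (real n)
      + ln (2 / delta)) / real n"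
  shows "measure_pmf.prob (Pi_pmf {..<n} undefined (\<lambda>_. D))
    {S. \<exists>f\<in>F_set N Phi. (\<forall>f'\<in>F_set N Phi. emp_risk f n S \<le> emp_risk f' n S) \<and> \<Delta> < mean_sq_dev f}
    \<le> delta"
proof -
  let ?Q = "Pi_pmf {..<n} undefined (\<lambda>_. D)"
  let ?G = "grid_class N n Phi :: ('x \<Rightarrow> 'a \<Rightarrow> 'x \<Rightarrow> real) set"
  let ?G' = "{g \<in> ?G. \<Delta> - 2 / real n < mean_sq_dev g}"
  have fin_G: "finite ?G"
    using Phi_fin by (rule finite_grid_class)
  then have fin_G': "finite ?G'"
    by (rule finite_subset[rotated]) auto
  define bad where "bad g = {S. emp_risk g n S \<le> emp_risk fs n S + 2}" for g
  define E where "E = exp (3/4 - 3/16 * real n * (\<Delta> - 2 / real n))"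
  have "AE S in measure_pmf ?Q. S \<in> {S. \<exists>f\<in>F_set N Phi.
      (\<forall>f'\<in>F_set N Phi. emp_risk f n S \<le> emp_risk f' n S) \<and> \<Delta> < mean_sq_dev f}
    \<longrightarrow> S \<in> (\<Union>g\<in>?G'. bad g)"
  proof (intro AE_pmfI impI)
    fix S assume S: "S \<in> set_pmf ?Q" and "S \<in> {S. \<exists>f\<in>F_set N Phi.
      (\<forall>f'\<in>F_set N Phi. emp_risk f n S \<le> emp_risk f' n S) \<and> \<Delta> < mean_sq_dev f}"
    then obtain f where "f \<in> F_set N Phi" "\<forall>f'\<in>F_set N Phi. emp_risk f n S \<le> emp_risk f' n S"
      and "\<Delta> < mean_sq_dev f" by blast
    then obtain g where "g \<in> ?G" "emp_risk g n S \<le> emp_risk fs n S + 2"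
      and "mean_sq_dev f \<le> mean_sq_dev g + 2 / real n"
      using erm_grid_witness[OF _ Phi fs S] \<open>2 \<le> n\<close> by fastforce
    then show "S \<in> (\<Union>g\<in>?G'. bad g)"
      using \<open>\<Delta> < mean_sq_dev f\<close> by (auto simp: bad_def)
  qed
  then have "measure_pmf.prob ?Q {S. \<exists>f\<in>F_set N Phi.
      (\<forall>f'\<in>F_set N Phi. emp_risk f n S \<le> emp_risk f' n S) \<and> \<Delta> < mean_sq_dev f}
      \<le> measure_pmf.prob ?Q (\<Union>g\<in>?G'. bad g)"
    by (intro measure_pmf.finite_measure_mono_AE) auto
  also have "\<dots> \<le> (\<Sum>g\<in>?G'. measure_pmf.prob ?Q (bad g))"
    using fin_G' by (intro measure_pmf.finite_measure_subadditive_finite) auto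
  also have "\<dots> \<le> (\<Sum>g\<in>?G'. E)"
  proof (intro sum_mono)
    fix g assume g: "g \<in> ?G'"
    then have "g \<in> ?G" by simp
    have "measure_pmf.prob ?Q (bad g) \<le> exp (3/8 * 2 - 3/16 * real n * mean_sq_dev g)"
      unfolding bad_def using grid_class_range[OF Phi \<open>g \<in> ?G\<close>] by (rule prob_emp_risk_le)
    also have "\<dots> \<le> E"
      using g \<open>2 \<le> n\<close> by (simp add: E_def mult_left_mono)
    finally show "measure_pmf.prob ?Q (bad g) \<le> E" .
  qed
  also have "\<dots> \<le> real (card ?G) * E"
    using fin_G by (simp add: E_def card_mono)
  also have "\<dots> \<le> delta"
  proof -
    have Phi_ne: "1 \<le> card Phi"
      using fs Phi_fin by (auto simp: F_set_def Suc_le_eq card_gt_0_iff)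
    have card_G: "real (card ?G) \<le> real (card Phi) ^ 2 * real (n + 1) ^ (N * CARD('a) * N)"
      using card_grid_class[OF Phi_fin] by (metis of_nat_le_iff of_nat_mult of_nat_power)
    have K: "real (N * CARD('a) * N) = real N ^ 2 * real CARD('a)"
      by (simp add: power2_eq_square)
    show ?thesis
      using union_bound_arith[OF Phi_ne \<open>2 \<le> n\<close> delta card_G] unfolding K E_def \<Delta>_def .
  qed
  finally show ?thesis .
qed

lemma erm_mean_sq_dev_bound:
  fixes n N :: nat
  assumes Phi_fin: "finite Phi" and Phi: "\<forall>phi\<in>Phi. \<forall>x. phi x < N" and fs: "fs \<in> F_set N Phi"
    and delta: "0 < delta" "delta < 1" and "1 \<le> n"
  shows "measure_pmf.prob (Pi_pmf {..<n} undefined (\<lambda>_. D))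
    {S. \<forall>f\<in>F_set N Phi. (\<forall>f'\<in>F_set N Phi. emp_risk f n S \<le> emp_risk f' n S) \<longrightarrow>
      mean_sq_dev f \<le> 16 * (ln (real (card Phi)) + real N ^ 2 * real CARD('a) * ln (real n)
        + ln (2 / delta)) / real n}
    \<ge> 1 - delta"
proof (cases "n = 1")
  case True
  have "1 \<le> card Phi"
    using fs Phi_fin by (auto simp: F_set_def Suc_le_eq card_gt_0_iff)
  moreover have "ln (2 / delta) = ln 2 - ln delta" "ln delta < 0"
    using delta by (simp_all add: ln_div)
  moreover have "0 \<le> ln (real (card Phi))"
    using \<open>1 \<le> card Phi\<close> by simp
  ultimately have "1 \<le> 16 * ln (real (card Phi)) + 16 * ln 2 - 16 * ln delta"
    using ln2_ge_two_thirds by linarith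
  then have "1 \<le> 16 * (ln (real (card Phi)) + ln (2 / delta))"
    using \<open>ln (2 / delta) = ln 2 - ln delta\<close> by (simp add: algebra_simps)
  moreover have "mean_sq_dev f \<le> 1" if "f \<in> F_set N Phi" for f
    using F_set_range[OF Phi that] by (rule mean_sq_dev_le_one)
  ultimately have "{S. \<forall>f\<in>F_set N Phi. (\<forall>f'\<in>F_set N Phi. emp_risk f n S \<le> emp_risk f' n S) \<longrightarrow>
      mean_sq_dev f \<le> 16 * (ln (real (card Phi)) + real N ^ 2 * real CARD('a) * ln (real n)
        + ln (2 / delta)) / real n} = UNIV"
    using True by fastforce
  then show ?thesis
    using delta by simp
next
  case False
  let ?Q = "Pi_pmf {..<n} undefined (\<lambda>_. D)"
  let ?\<Delta> = "16 * (ln (real (card Phi)) + real N ^ 2 * real CARD('a) * ln (real n)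
        + ln (2 / delta)) / real n"
  let ?bad = "{S. \<exists>f\<in>F_set N Phi. (\<forall>f'\<in>F_set N Phi. emp_risk f n S \<le> emp_risk f' n S)
    \<and> ?\<Delta> < mean_sq_dev f}"
  have "measure_pmf.prob ?Q ?bad \<le> delta"
    using False \<open>1 \<le> n\<close> by (intro prob_erm_mean_sq_dev_gt_le[OF Phi_fin Phi fs delta]) auto
  moreover have "measure_pmf.prob ?Q (UNIV - ?bad) = 1 - measure_pmf.prob ?Q ?bad"
    using measure_pmf.prob_compl[of ?bad ?Q] by simp
  moreover have "UNIV - ?bad = {S. \<forall>f\<in>F_set N Phi.
      (\<forall>f'\<in>F_set N Phi. emp_risk f n S \<le> emp_risk f' n S) \<longrightarrow> mean_sq_dev f \<le> ?\<Delta>}"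
    by (auto simp: not_less)
  ultimately show ?thesis
    by simp
qed

end

theorem mainTheorem12:
  fixes H h N n :: nat
    and mu :: "'s::finite pmf"
    and T :: "'s \<Rightarrow> 'a::finite \<Rightarrow> 's pmf"
    and q :: "'s \<Rightarrow> 'x::countable pmf"
    and g :: "'x \<Rightarrow> 's"
    and ls :: "'s \<Rightarrow> nat" and lx :: "'x \<Rightarrow> nat"
    and Psi :: "('x \<Rightarrow> 'a pmf) set" and alpha :: real
    and Phi :: "('x \<Rightarrow> nat) set"
    and delta :: real
  assumes H2: "2 \<le> H"
    and ls_range: "\<forall>s. 1 \<le> ls s \<and> ls s \<le> H"
    and lx_range: "\<forall>x. 1 \<le> lx x \<and> lx x \<le> H"
    and mu_layer: "set_pmf mu \<subseteq> {s. ls s = 1}"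
    and T_layer: "\<forall>s a. ls s < H \<longrightarrow> set_pmf (T s a) \<subseteq> {s'. ls s' = ls s + 1}"
    and q_layer: "\<forall>s. set_pmf (q s) \<subseteq> {x. lx x = ls s}"
    and decoder: "\<forall>s x. x \<in> set_pmf (q s) \<longrightarrow> g x = s"
    and decoder_layer: "\<forall>x. ls (g x) = lx x"
    and h_range: "2 \<le> h" "h \<le> H"
    and Psi_fin: "finite Psi" and Psi_ne: "Psi \<noteq> {}"
    and alpha_pos: "0 < alpha"
    and cover: "policy_cover mu T q g ls Psi alpha (h - 1)"
    and Phi_fin: "finite Phi"
    and Phi_range: "\<forall>phi\<in>Phi. \<forall>x. phi x < N"
    and N_ge: "N_KD H T q g lx \<le> N"
    and realizable: "fstar mu T q g Psi h \<in> F_set N Phi"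
    and delta: "0 < delta" "delta < 1"
    and n_pos: "1 \<le> n"
  shows "measure_pmf.prob (Pi_pmf {..<n} undefined (\<lambda>_. contrastive_dist mu T q g Psi h))
     {S. \<forall>f\<in>F_set N Phi. (\<forall>f'\<in>F_set N Phi. emp_risk f n S \<le> emp_risk f' n S) \<longrightarrow>
          measure_pmf.expectation (contrastive_dist mu T q g Psi h)
            (\<lambda>(x, a, x', y). (f x a x' - fstar mu T q g Psi h x a x')\<^sup>2)
          \<le> 16 * (ln (real (card Phi)) + real N ^ 2 * real CARD('a) * ln (real n)
                  + ln (2 / delta)) / real n}
   \<ge> 1 - delta"
proof -
  interpret contrastive_sampling mu T q g Psi h
    using decoder by unfold_locales blast
  interpret binary_regression "contrastive_dist mu T q g Psi h" "fstar mu T q g Psi h"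
    using contrastive_dist_label fstar_regression fstar_range by unfold_locales blast+
  show ?thesis
    using erm_mean_sq_dev_bound[OF Phi_fin Phi_range realizable delta n_pos]
    by (simp add: mean_sq_dev_def)
qed

end
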